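(* Consider the no-slip billiard in a circular solid cylinder $\mathcal{B}\subset\mathbb{R}^3$ with axis vector $e$, whose moving particle is subject to a constant force directed along the axis of the cylinder. If the first collision satisfies the transversal rolling impact condition and the first flight segment does not pass through the axis of the cylinder, then the particle's trajectory is bounded.
   Context: The moving particle is a ball of radius $r>0$ with a rotationally symmetric mass distribution of total mass $m$ whose second-moment matrix per unit mass is $\lambda I$, $\lambda=(r\gamma)^2/2$, $\gamma>0$. Put $c=\frac{1-\gamma^2}{1+\gamma^2}$, $s=\frac{2\gamma}{1+\gamma^2}$, and for $a,b\in\mathbb{R}^3$ let $a\wedge b\in\mathfrak{so}(3)$ be $(a\wedge b)x=(a\cdot x)b-(b\cdot x)a$. The billiard domain $\mathcal{B}$ (the set of admissible centers) is $\{x:|x-(x\cdot e)e|\le R-r\}$ for some $R>r$; at $a\in\partial\mathcal{B}$, $\nu_a$ is the unit normal pointing into $\mathcal{B}$. A state is $(a,u,U)$ with $u$ the center-of-mass velocity and $U\in\mathfrak{so}(3)$ the angular velocity matrix (a material point at $x$ has velocity $U(x-a)+u$). Between collisions $U$ is constant and the center of mass moves with constant acceleration $F/m$, $F$ the constant force; at a collision at $a$ the pre-collision $(u,U)$ is replaced by $C_a(u,U)=\big(cu-\tfrac{s}{\gamma}(u\cdot\nu_a)\nu_a+s\gamma rU\nu_a,\ \tfrac{s}{\gamma r}\nu_a\wedge u+U-\tfrac{s}{\gamma}\nu_a\wedge U\nu_a\big)$. A pre-collision state $(a,u,U)$ satisfies the transversal rolling impact condition if the orthogonal projection of $v=u-rU\nu_a$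 onto $e^\perp\cap T_a\partial\mathcal{B}$ is zero; equivalently, with $\omega$ defined by $Ux=\omega\times x$ and $\tau_a=\nu_a\times e$, $u\cdot\tau_a+r\,\omega\cdot e=0$. *)

theory Defs
  imports "HOL-Analysis.Analysis" "HOL-Analysis.Cross3"
begin

text \<open>Vectors in R^3 and 3x3 matrices (angular velocity matrices U in so(3)).
  The cylinder axis is the line through the origin spanned by the unit vector e.\<close>

definition perp :: "real^3 \<Rightarrow> real^3 \<Rightarrow> real^3" where
  "perp e x = x - (x \<bullet> e) *\<^sub>R e"

text \<open>Billiard domain (admissible centers), its boundary, and the axis.\<close>
definition cylB :: "real^3 \<Rightarrow> real \<Rightarrow> real \<Rightarrow> (real^3) set" where
  "cylB e R r = {x. norm (perp e x) \<le> R - r}"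

definition cylBd :: "real^3 \<Rightarrow> real \<Rightarrow> real \<Rightarrow> (real^3) set" where
  "cylBd e R r = {x. norm (perp e x) = R - r}"

definition axis :: "real^3 \<Rightarrow> (real^3) set" where
  "axis e = {x. perp e x = 0}"

definition nrm :: "real^3 \<Rightarrow> real^3 \<Rightarrow> real^3" where
  "nrm e a = - ((1 / norm (perp e a)) *\<^sub>R perp e a)"

definition wedge :: "real^3 \<Rightarrow> real^3 \<Rightarrow> real^3^3" where
  "wedge a b = (\<chi> i j. b $ i * a $ j - a $ i * b $ j)"

definition cc :: "real \<Rightarrow> real" where "cc \<gamma> = (1 - \<gamma>^2) / (1 + \<gamma>^2)"
definition ss :: "real \<Rightarrow> real" where "ss \<gamma> = 2 * \<gamma> / (1 + \<gamma>^2)"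

definition coll_u :: "real \<Rightarrow> real \<Rightarrow> real^3 \<Rightarrow> real^3 \<Rightarrow> real^3^3 \<Rightarrow> real^3" where
  "coll_u \<gamma> r \<nu> u U =
     cc \<gamma> *\<^sub>R u - (ss \<gamma> / \<gamma> * (u \<bullet> \<nu>)) *\<^sub>R \<nu> + (ss \<gamma> * \<gamma> * r) *\<^sub>R (U *v \<nu>)"

definition coll_U :: "real \<Rightarrow> real \<Rightarrow> real^3 \<Rightarrow> real^3 \<Rightarrow> real^3^3 \<Rightarrow> real^3^3" where
  "coll_U \<gamma> r \<nu> u U =
     (ss \<gamma> / (\<gamma> * r)) *\<^sub>R wedge \<nu> u + U - (ss \<gamma> / \<gamma>) *\<^sub>R wedge \<nu> (U *v \<nu>)"

definition flight ::
  "real^3 \<Rightarrow> real \<Rightarrow> real \<Rightarrow> real \<Rightarrow> real^3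
   \<Rightarrow> (nat \<Rightarrow> real^3) \<Rightarrow> (nat \<Rightarrow> real^3) \<Rightarrow> (nat \<Rightarrow> real^3^3) \<Rightarrow> nat \<Rightarrow> real \<Rightarrow> real^3" where
  "flight e r \<gamma> m F a u U k s =
     a k + s *\<^sub>R coll_u \<gamma> r (nrm e (a k)) (u k) (U k) + (s^2 / (2 * m)) *\<^sub>R F"

text \<open>Admissible time parameters of the k-th flight segment; the last flight
  (if there are only finitely many collisions, N of them) lasts forever.\<close>
definition flight_dom :: "enat \<Rightarrow> (nat \<Rightarrow> real) \<Rightarrow> nat \<Rightarrow> real set" where
  "flight_dom N t k = {s. 0 \<le> s \<and> (enat (Suc k) < N \<longrightarrow> s \<le> t (Suc k) - t k)}"

text \<open>A no-slip billiard orbit starting at its first collision: N \<ge> 1 collisions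
  (possibly infinitely many), at times t k, at centers a k, with pre-collision
  velocities u k, U k.\<close>
definition orbit ::
  "real^3 \<Rightarrow> real \<Rightarrow> real \<Rightarrow> real \<Rightarrow> real \<Rightarrow> real^3 \<Rightarrow> enat
   \<Rightarrow> (nat \<Rightarrow> real) \<Rightarrow> (nat \<Rightarrow> real^3) \<Rightarrow> (nat \<Rightarrow> real^3) \<Rightarrow> (nat \<Rightarrow> real^3^3) \<Rightarrow> bool" where
  "orbit e R r \<gamma> m F N t a u U \<longleftrightarrow>
     1 \<le> N \<and>
     (\<forall>k. enat k < N \<longrightarrow> a k \<in> cylBd e R r) \<and>
     (\<forall>k. enat (Suc k) < N \<longrightarrow>
        t k < t (Suc k) \<and>
        (\<forall>s. 0 < s \<and> s < t (Suc k) - t k \<longrightarrow>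
             norm (perp e (flight e r \<gamma> m F a u U k s)) < R - r) \<and>
        a (Suc k) = flight e r \<gamma> m F a u U k (t (Suc k) - t k) \<and>
        u (Suc k) = coll_u \<gamma> r (nrm e (a k)) (u k) (U k) + ((t (Suc k) - t k) / m) *\<^sub>R F \<and>
        U (Suc k) = coll_U \<gamma> r (nrm e (a k)) (u k) (U k)) \<and>
     (\<forall>k. N = enat (Suc k) \<longrightarrow>
        (\<forall>s. 0 < s \<longrightarrow> norm (perp e (flight e r \<gamma> m F a u U k s)) < R - r))"

text \<open>Transversal rolling impact condition at a pre-collision state (a,u,U):
  the projection of v = u - r U nu_a onto e-perp \<inter> T_a(boundary) = span(nu_a x e) vanishes.\<close>
definition trans_rolling :: "real^3 \<Rightarrow> real \<Rightarrow> real^3 \<Rightarrow> real^3 \<Rightarrow> real^3^3 \<Rightarrow> bool" where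
  "trans_rolling e r a u U \<longleftrightarrow>
     (let \<nu> = nrm e a; \<tau> = cross3 \<nu> e; v = u - r *\<^sub>R (U *v \<nu>) in (v \<bullet> \<tau>) *\<^sub>R \<tau> = 0)"

end

theory Submission
  imports Defs
begin

(* Projected to the plane orthogonal to the axis, the centre performs an ordinary billiard in
   the disc of radius R - r: the force is axial, and under the transversal rolling condition,
   which every later collision inherits, the collision map reflects the horizontal velocity
   specularly.  Hence all flights last the same time and consecutive normals differ by a fixed
   rotation.  The axial velocity p and the components A, B of r times the angular velocity
   along the rotating tangent and normal then obey an affine recurrence that is orthogonal for
   p^2 + gamma^2 (A^2 + B^2) around its fixed point, so they stay bounded; finally the height
   increments telescope against a bounded potential, so the height stays bounded too. *)

unbundle cross3_syntax

section \<open>Frames adapted to the axis\<close>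

lemma perp_add: "perp e (x + y) = perp e x + perp e y"
  and perp_scaleR: "perp e (c *\<^sub>R x) = c *\<^sub>R perp e x"
  unfolding perp_def by (simp_all add: inner_add_left inner_diff_left algebra_simps)

lemma perp_self: "e \<bullet> e = 1 \<Longrightarrow> perp e e = 0"
  unfolding perp_def by simp

lemma perp_inner_axis: "e \<bullet> e = 1 \<Longrightarrow> perp e x \<bullet> e = 0"
  unfolding perp_def by (simp add: inner_diff_left)

lemma perp_inner: "\<nu> \<bullet> e = 0 \<Longrightarrow> perp e x \<bullet> \<nu> = x \<bullet> \<nu>"
  unfolding perp_def by (simp add: inner_diff_left inner_commute[of e \<nu>])

lemma inner_perp_cross: "x \<bullet> (perp e x \<times> e) = 0"
proof -
  have "x = perp e x + (x \<bullet> e) *\<^sub>R e" unfolding perp_def by simp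
  then have "x \<bullet> (perp e x \<times> e) = perp e x \<bullet> (perp e x \<times> e) + (x \<bullet> e) * (e \<bullet> (perp e x \<times> e))"
    by (metis inner_add_left inner_scaleR_left)
  then show ?thesis by (simp add: dot_cross_self)
qed

lemma norm_le_perp_plus_axial: "norm e = 1 \<Longrightarrow> norm x \<le> norm (perp e x) + \<bar>x \<bullet> e\<bar>"
  using norm_triangle_ineq[of "perp e x" "(x \<bullet> e) *\<^sub>R e"] by (simp add: perp_def)

lemma cross_axis_frame:
  fixes e \<nu> :: "real^3"
  assumes e: "e \<bullet> e = 1" and \<nu>: "\<nu> \<bullet> \<nu> = 1" "\<nu> \<bullet> e = 0"
  shows cross_axis_unit: "(\<nu> \<times> e) \<bullet> (\<nu> \<times> e) = 1"
    and cross_axis_inner_normal: "(\<nu> \<times> e) \<bullet> \<nu> = 0"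
    and cross_axis_cross_axis: "(\<nu> \<times> e) \<times> e = - \<nu>"
    and cross_axis_decomposition:
      "x = (x \<bullet> \<nu>) *\<^sub>R \<nu> + (x \<bullet> (\<nu> \<times> e)) *\<^sub>R (\<nu> \<times> e) + (x \<bullet> e) *\<^sub>R e"
proof -
  define \<tau> where "\<tau> = \<nu> \<times> e"
  have e\<nu>: "e \<bullet> \<nu> = 0" using \<nu> by (simp add: inner_commute)
  show \<tau>\<tau>: "(\<nu> \<times> e) \<bullet> (\<nu> \<times> e) = 1"
    using e \<nu> e\<nu> by (simp add: dot_cross)
  show "(\<nu> \<times> e) \<bullet> \<nu> = 0"
    by (simp add: dot_cross_self inner_commute)
  show \<tau>e: "(\<nu> \<times> e) \<times> e = - \<nu>"
    using e e\<nu> by (simp add: cross_skew[of _ e] Lagrange)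
  have \<tau>\<nu>: "\<tau> \<times> \<nu> = e"
    using \<nu> by (simp add: \<tau>_def cross_skew[of _ \<nu>] Lagrange)
  have "x - (x \<bullet> \<tau>) *\<^sub>R \<tau> = \<tau> \<times> (x \<times> \<tau>)"
    using \<tau>\<tau> Lagrange[of \<tau> x \<tau>] by (simp add: \<tau>_def inner_commute)
  also have "\<dots> = \<tau> \<times> ((x \<bullet> e) *\<^sub>R \<nu> - (x \<bullet> \<nu>) *\<^sub>R e)"
    using Lagrange[of x \<nu> e] by (simp add: \<tau>_def)
  also have "\<dots> = (x \<bullet> e) *\<^sub>R e + (x \<bullet> \<nu>) *\<^sub>R \<nu>"
    using \<tau>e \<tau>\<nu> by (simp add: \<tau>_def Cross3.right_diff_distrib cross_mult_right)
  finally show "x = (x \<bullet> \<nu>) *\<^sub>R \<nu> + (x \<bullet> (\<nu> \<times> e)) *\<^sub>R (\<nu> \<times> e) + (x \<bullet> e) *\<^sub>R e"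
    by (simp add: \<tau>_def algebra_simps)
qed

lemma perp_decomposition:
  fixes e \<nu> :: "real^3"
  assumes "e \<bullet> e = 1" "\<nu> \<bullet> \<nu> = 1" "\<nu> \<bullet> e = 0"
  shows "perp e x = (x \<bullet> \<nu>) *\<^sub>R \<nu> + (x \<bullet> (\<nu> \<times> e)) *\<^sub>R (\<nu> \<times> e)"
  using cross_axis_decomposition[OF assms, of x] unfolding perp_def
  by (metis add_diff_cancel_right')

lemma normal_rotation:
  fixes e \<nu>0 \<nu>1 :: "real^3"
  assumes e: "e \<bullet> e = 1" and \<nu>0: "\<nu>0 \<bullet> \<nu>0 = 1" "\<nu>0 \<bullet> e = 0"
    and \<nu>1: "\<nu>1 \<bullet> \<nu>1 = 1" "\<nu>1 \<bullet> e = 0"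
  defines "C \<equiv> \<nu>1 \<bullet> \<nu>0" and "S \<equiv> \<nu>1 \<bullet> (\<nu>0 \<times> e)"
  shows "\<nu>1 = C *\<^sub>R \<nu>0 + S *\<^sub>R (\<nu>0 \<times> e)"
    and "\<nu>1 \<times> e = C *\<^sub>R (\<nu>0 \<times> e) - S *\<^sub>R \<nu>0"
    and "C\<^sup>2 + S\<^sup>2 = 1"
proof -
  show \<nu>1_eq: "\<nu>1 = C *\<^sub>R \<nu>0 + S *\<^sub>R (\<nu>0 \<times> e)"
    using cross_axis_decomposition[OF e \<nu>0, of \<nu>1] \<nu>1 by (simp add: C_def S_def)
  show "\<nu>1 \<times> e = C *\<^sub>R (\<nu>0 \<times> e) - S *\<^sub>R \<nu>0"
    by (subst \<nu>1_eq) (simp add: cross_add_left cross_mult_left cross_axis_cross_axis[OF e \<nu>0])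
  have "1 = (C *\<^sub>R \<nu>0 + S *\<^sub>R (\<nu>0 \<times> e)) \<bullet> (C *\<^sub>R \<nu>0 + S *\<^sub>R (\<nu>0 \<times> e))"
    using \<nu>1 \<nu>1_eq by simp
  also have "\<dots> = C\<^sup>2 + S\<^sup>2"
    using \<nu>0 cross_axis_unit[OF e \<nu>0] cross_axis_inner_normal[OF e \<nu>0]
    by (simp add: inner_add_left inner_add_right inner_commute power2_eq_square)
  finally show "C\<^sup>2 + S\<^sup>2 = 1" ..
qed

lemma skew_inner_swap:
  fixes U :: "real^'n^'n"
  assumes "transpose U = - U"
  shows "(U *v x) \<bullet> y = - ((U *v y) \<bullet> x)"
proof -
  have "(U *v x) \<bullet> y = x \<bullet> (transpose U *v y)"
    by (metis dot_lmul_matrix vector_transpose_matrix)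
  moreover have "(- U) *v y = - (U *v y)"
    by (metis diff_0 matrix_vector_mult_0 matrix_vector_mult_diff_rdistrib)
  ultimately show ?thesis
    using assms by (simp add: inner_commute)
qed

lemma skew_inner_self: "transpose U = - U \<Longrightarrow> (U *v x) \<bullet> x = 0"
  for U :: "real^'n^'n"
  using skew_inner_swap[of U x x] by simp

lemma skew_normal_tangent_invariant:
  fixes e \<nu>0 \<nu>1 :: "real^3" and U :: "real^3^3"
  assumes U: "transpose U = - U" and e: "e \<bullet> e = 1"
    and \<nu>0: "\<nu>0 \<bullet> \<nu>0 = 1" "\<nu>0 \<bullet> e = 0" and \<nu>1: "\<nu>1 \<bullet> \<nu>1 = 1" "\<nu>1 \<bullet> e = 0"
  shows "(U *v \<nu>1) \<bullet> (\<nu>1 \<times> e) = (U *v \<nu>0) \<bullet> (\<nu>0 \<times> e)"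
proof -
  define \<tau> where "\<tau> = \<nu>0 \<times> e"
  define C where "C = \<nu>1 \<bullet> \<nu>0"
  define S where "S = \<nu>1 \<bullet> \<tau>"
  note rot = normal_rotation[OF e \<nu>0 \<nu>1, folded \<tau>_def C_def S_def]
  have "(U *v \<nu>1) \<bullet> (\<nu>1 \<times> e) =
      C * C * ((U *v \<nu>0) \<bullet> \<tau>) - C * S * ((U *v \<nu>0) \<bullet> \<nu>0)
      + S * C * ((U *v \<tau>) \<bullet> \<tau>) - S * S * ((U *v \<tau>) \<bullet> \<nu>0)"
    unfolding rot(2) by (subst rot(1))
      (simp add: algebra_simps inner_add_left inner_diff_right)
  also have "\<dots> = (C\<^sup>2 + S\<^sup>2) * ((U *v \<nu>0) \<bullet> \<tau>)"
    using skew_inner_swap[OF U, of \<tau> \<nu>0]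
    by (simp add: skew_inner_self[OF U] power2_eq_square algebra_simps)
  finally show ?thesis
    using rot(3) by (simp add: \<tau>_def)
qed

section \<open>The collision map\<close>

lemma one_plus_sq_pos: "0 < 1 + (\<gamma>::real)\<^sup>2"
  by (rule add_pos_nonneg) simp_all

lemma ss_div_gamma:
  assumes "\<gamma> > 0" shows "ss \<gamma> / \<gamma> = 1 + cc \<gamma>"
proof -
  have "ss \<gamma> / \<gamma> = 2 / (1 + \<gamma>\<^sup>2)"
    using assms by (simp add: ss_def)
  also have "\<dots> = 1 + cc \<gamma>"
    using one_plus_sq_pos[of \<gamma>] by (simp add: cc_def field_simps)
  finally show ?thesis .
qed

lemma ss_mult_gamma: "ss \<gamma> * \<gamma> = 1 - cc \<gamma>"
  using one_plus_sq_pos[of \<gamma>] unfolding ss_def cc_def by (simp add: field_simps power2_eq_square)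

lemma cc_mult_one_plus_sq: "cc \<gamma> * (1 + \<gamma>\<^sup>2) = 1 - \<gamma>\<^sup>2"
  using one_plus_sq_pos[of \<gamma>] by (simp add: cc_def)

lemma cc_sq_plus_ss_sq: "(cc \<gamma>)\<^sup>2 + (ss \<gamma>)\<^sup>2 = 1"
  using one_plus_sq_pos[of \<gamma>] unfolding cc_def ss_def
  by (simp add: field_simps) (simp add: power2_eq_square algebra_simps)

lemma wedge_mult_vector: "wedge a b *v x = (a \<bullet> x) *\<^sub>R b - (b \<bullet> x) *\<^sub>R a"
  by (simp add: wedge_def matrix_vector_mult_def vec_eq_iff inner_vec_def sum_3 algebra_simps forall_3)

lemma transpose_wedge: "transpose (wedge a b) = - wedge a b"
  by (simp add: wedge_def transpose_def vec_eq_iff)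

lemma transpose_add: "transpose (A + B) = transpose A + transpose B"
  by (simp add: transpose_def vec_eq_iff)

lemma transpose_diff: "transpose (A - B) = transpose A - transpose B"
  by (simp add: transpose_def vec_eq_iff)

lemma coll_U_skew:
  "transpose U = - U \<Longrightarrow> transpose (coll_U \<gamma> r \<nu> u U) = - coll_U \<gamma> r \<nu> u U"
  unfolding coll_U_def by (simp add: transpose_add transpose_diff transpose_scalar transpose_wedge)

lemma coll_u_inner:
  "coll_u \<gamma> r \<nu> u U \<bullet> x =
     cc \<gamma> * (u \<bullet> x) - ss \<gamma> / \<gamma> * (u \<bullet> \<nu>) * (\<nu> \<bullet> x) + ss \<gamma> * \<gamma> * r * ((U *v \<nu>) \<bullet> x)"
  unfolding coll_u_def by (simp add: inner_add_left inner_diff_left)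

lemma coll_U_mult_vector:
  "coll_U \<gamma> r \<nu> u U *v x =
     (ss \<gamma> / (\<gamma> * r)) *\<^sub>R ((\<nu> \<bullet> x) *\<^sub>R u - (u \<bullet> x) *\<^sub>R \<nu>) + U *v x
     - (ss \<gamma> / \<gamma>) *\<^sub>R ((\<nu> \<bullet> x) *\<^sub>R (U *v \<nu>) - ((U *v \<nu>) \<bullet> x) *\<^sub>R \<nu>)"
  unfolding coll_U_def
  by (simp only: matrix_vector_mult_add_rdistrib matrix_vector_mult_diff_rdistrib
      scaleR_matrix_vector_assoc[symmetric] wedge_mult_vector)

lemma coll_u_axial:
  "\<nu> \<bullet> e = 0 \<Longrightarrow> coll_u \<gamma> r \<nu> u U \<bullet> e = cc \<gamma> * (u \<bullet> e) + ss \<gamma> * \<gamma> * (r * ((U *v \<nu>) \<bullet> e))"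
  by (simp add: coll_u_inner)

lemma coll_U_normal_axial:
  assumes "\<nu> \<bullet> \<nu> = 1" "\<nu> \<bullet> e = 0" "\<gamma> > 0" "r > 0"
  shows "r * ((coll_U \<gamma> r \<nu> u U *v \<nu>) \<bullet> e) = ss \<gamma> / \<gamma> * (u \<bullet> e) - cc \<gamma> * (r * ((U *v \<nu>) \<bullet> e))"
proof -
  have "r * ((coll_U \<gamma> r \<nu> u U *v \<nu>) \<bullet> e) =
      ss \<gamma> / \<gamma> * (u \<bullet> e) + (1 - ss \<gamma> / \<gamma>) * (r * ((U *v \<nu>) \<bullet> e))"
    using assms by (simp add: coll_U_mult_vector inner_add_left inner_diff_left algebra_simps)
  then show ?thesis
    using ss_div_gamma[OF \<open>\<gamma> > 0\<close>] by simp
qed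

lemma coll_U_orthogonal_axial:
  "x \<bullet> \<nu> = 0 \<Longrightarrow> \<nu> \<bullet> e = 0 \<Longrightarrow> (coll_U \<gamma> r \<nu> u U *v x) \<bullet> e = (U *v x) \<bullet> e"
  by (simp add: coll_U_mult_vector inner_add_left inner_diff_left inner_commute[of \<nu> x])

lemma rolling_collision:
  fixes e \<nu> u :: "real^3" and U :: "real^3^3"
  defines "\<tau> \<equiv> \<nu> \<times> e"
  assumes e: "e \<bullet> e = 1" and \<nu>: "\<nu> \<bullet> \<nu> = 1" "\<nu> \<bullet> e = 0" and U: "transpose U = - U"
    and \<gamma>: "\<gamma> > 0" and r: "r > 0" and rolling: "u \<bullet> \<tau> = r * ((U *v \<nu>) \<bullet> \<tau>)"
  shows coll_u_tangent: "coll_u \<gamma> r \<nu> u U \<bullet> \<tau> = u \<bullet> \<tau>"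
    and coll_u_perp: "perp e (coll_u \<gamma> r \<nu> u U) = perp e u - (2 * (u \<bullet> \<nu>)) *\<^sub>R \<nu>"
    and coll_U_normal_tangent: "(coll_U \<gamma> r \<nu> u U *v \<nu>) \<bullet> \<tau> = (U *v \<nu>) \<bullet> \<tau>"
proof -
  have \<nu>\<tau>: "\<nu> \<bullet> \<tau> = 0"
    unfolding \<tau>_def by (simp add: dot_cross_self)
  have U\<nu>\<nu>: "(U *v \<nu>) \<bullet> \<nu> = 0"
    using U by (rule skew_inner_self)
  have "coll_u \<gamma> r \<nu> u U \<bullet> \<tau> = (cc \<gamma> + ss \<gamma> * \<gamma>) * (u \<bullet> \<tau>)"
    using \<nu>\<tau> rolling by (simp add: coll_u_inner algebra_simps)
  then show tangent: "coll_u \<gamma> r \<nu> u U \<bullet> \<tau> = u \<bullet> \<tau>"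
    by (simp add: ss_mult_gamma)
  have "coll_u \<gamma> r \<nu> u U \<bullet> \<nu> = (cc \<gamma> - ss \<gamma> / \<gamma>) * (u \<bullet> \<nu>)"
    using \<nu> U\<nu>\<nu> by (simp add: coll_u_inner algebra_simps)
  then have normal: "coll_u \<gamma> r \<nu> u U \<bullet> \<nu> = - (u \<bullet> \<nu>)"
    by (simp add: ss_div_gamma[OF \<gamma>])
  show "perp e (coll_u \<gamma> r \<nu> u U) = perp e u - (2 * (u \<bullet> \<nu>)) *\<^sub>R \<nu>"
  proof -
    have "(2 * (u \<bullet> \<nu>)) *\<^sub>R \<nu> = (u \<bullet> \<nu>) *\<^sub>R \<nu> + (u \<bullet> \<nu>) *\<^sub>R \<nu>"
      by (metis mult_2 scaleR_left_distrib)
    then show ?thesis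
      unfolding perp_decomposition[OF e \<nu>] \<tau>_def[symmetric] tangent normal by simp
  qed
  have "(coll_U \<gamma> r \<nu> u U *v \<nu>) \<bullet> \<tau> =
      ss \<gamma> / (\<gamma> * r) * (u \<bullet> \<tau>) + (1 - ss \<gamma> / \<gamma>) * ((U *v \<nu>) \<bullet> \<tau>)"
    using \<nu> \<nu>\<tau> U\<nu>\<nu> by (simp add: coll_U_mult_vector inner_add_left inner_diff_left algebra_simps)
  then show "(coll_U \<gamma> r \<nu> u U *v \<nu>) \<bullet> \<tau> = (U *v \<nu>) \<bullet> \<tau>"
    using rolling r by (simp add: algebra_simps)
qed

section \<open>Billiards in a disc\<close>

lemma norm_add_scaleR_sq:
  fixes P w :: "'a::real_inner"
  shows "(norm (P + s *\<^sub>R w))\<^sup>2 = (norm P)\<^sup>2 + s * (2 * (P \<bullet> w) + s * (w \<bullet> w))"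
  by (simp add: power2_norm_eq_inner inner_add_left inner_add_right inner_commute algebra_simps)

lemma chord_condition:
  fixes P w :: "'a::real_inner"
  assumes "norm P = \<rho>" and "norm (P + T *\<^sub>R w) = \<rho>" and "T \<noteq> 0"
  shows "2 * (P \<bullet> w) + T * (w \<bullet> w) = 0"
  using assms norm_add_scaleR_sq[of P T w] by simp

lemma ray_leaves_ball:
  fixes P w :: "'a::real_inner"
  assumes "norm P = \<rho>"
  shows "\<exists>s>0. \<rho> \<le> norm (P + s *\<^sub>R w)"
proof (cases "w = 0")
  case True
  then show ?thesis
    using assms by (intro exI[of _ 1]) simp
next
  case False
  define s where "s = (2 * \<bar>P \<bullet> w\<bar> + 1) / (w \<bullet> w)"
  have "s > 0" and "s * (w \<bullet> w) = 2 * \<bar>P \<bullet> w\<bar> + 1"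
    using False by (simp_all add: s_def)
  then have "0 \<le> 2 * (P \<bullet> w) + s * (w \<bullet> w)"
    by (simp add: abs_if)
  then have "(norm P)\<^sup>2 \<le> (norm (P + s *\<^sub>R w))\<^sup>2"
    unfolding norm_add_scaleR_sq using \<open>s > 0\<close> by simp
  then show ?thesis
    using \<open>s > 0\<close> assms by (metis norm_ge_zero power2_le_imp_le)
qed

lemma disc_reflection_invariants:
  fixes P0 P1 w e :: "real^3"
  assumes \<rho>: "\<rho> > 0" and P0: "norm P0 = \<rho>" and P1: "norm P1 = \<rho>"
    and chord: "P1 = P0 + T *\<^sub>R w" and "T \<noteq> 0"
  defines "\<nu> \<equiv> - (1 / \<rho>) *\<^sub>R P1"
  defines "w' \<equiv> w - (2 * (w \<bullet> \<nu>)) *\<^sub>R \<nu>"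
  shows "w' \<bullet> w' = w \<bullet> w" and "P1 \<bullet> w' = P0 \<bullet> w" and "w' \<bullet> (P1 \<times> e) = w \<bullet> (P0 \<times> e)"
proof -
  have P1P1: "P1 \<bullet> P1 = \<rho>\<^sup>2"
    using P1 by (metis power2_norm_eq_inner)
  then have \<nu>\<nu>: "\<nu> \<bullet> \<nu> = 1"
    using \<rho> by (simp add: \<nu>_def power2_eq_square)
  show "w' \<bullet> w' = w \<bullet> w"
    using \<nu>\<nu> by (simp add: w'_def inner_diff_left inner_diff_right inner_commute algebra_simps)
  have "P1 \<bullet> w' = - (P1 \<bullet> w)"
    using P1P1 \<rho> by (simp add: w'_def \<nu>_def inner_diff_right inner_commute power2_eq_square)
  also have "\<dots> = P0 \<bullet> w"
    using chord_condition[OF P0 P1[unfolded chord] \<open>T \<noteq> 0\<close>]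
    by (simp add: chord inner_add_left)
  finally show "P1 \<bullet> w' = P0 \<bullet> w" .
  have "w' \<bullet> (P1 \<times> e) = w \<bullet> (P1 \<times> e)"
    by (simp add: w'_def \<nu>_def inner_diff_left dot_cross_self)
  also have "\<dots> = w \<bullet> (P0 \<times> e)"
    by (simp add: chord cross_add_left cross_mult_left inner_add_right dot_cross_self)
  finally show "w' \<bullet> (P1 \<times> e) = w \<bullet> (P0 \<times> e)" .
qed

section \<open>The axial recurrence\<close>

lemma collision_energy_invariant:
  fixes x y z :: real
  assumes \<gamma>: "\<gamma> > 0" and CS: "C\<^sup>2 + S\<^sup>2 = 1"
  defines "q \<equiv> ss \<gamma> / \<gamma> * x - cc \<gamma> * y"
  shows "(cc \<gamma> * x + ss \<gamma> * \<gamma> * y)\<^sup>2 + \<gamma>\<^sup>2 * ((C * q + S * z)\<^sup>2 + (C * z - S * q)\<^sup>2)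
    = x\<^sup>2 + \<gamma>\<^sup>2 * y\<^sup>2 + \<gamma>\<^sup>2 * z\<^sup>2"
proof -
  have "(C * q + S * z)\<^sup>2 + (C * z - S * q)\<^sup>2 = (C\<^sup>2 + S\<^sup>2) * (q\<^sup>2 + z\<^sup>2)"
    by (simp add: power2_eq_square algebra_simps)
  moreover have "\<gamma>\<^sup>2 * q\<^sup>2 = (ss \<gamma> * x - cc \<gamma> * \<gamma> * y)\<^sup>2"
    using \<gamma> by (simp add: q_def field_simps power2_eq_square)
  moreover have "(cc \<gamma> * x + ss \<gamma> * \<gamma> * y)\<^sup>2 + (ss \<gamma> * x - cc \<gamma> * \<gamma> * y)\<^sup>2
      = ((cc \<gamma>)\<^sup>2 + (ss \<gamma>)\<^sup>2) * (x\<^sup>2 + \<gamma>\<^sup>2 * y\<^sup>2)"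
    by (simp add: power2_eq_square algebra_simps)
  ultimately show ?thesis
    using CS by (simp add: cc_sq_plus_ss_sq algebra_simps)
qed

lemma collision_recurrence_fixed_point:
  fixes C S G :: real
  assumes \<gamma>: "\<gamma> > 0" and CS: "C\<^sup>2 + S\<^sup>2 = 1" and C1: "C \<noteq> 1"
  defines "p0 \<equiv> G / 2" and "A0 \<equiv> - G / (2 * \<gamma>\<^sup>2)" and "B0 \<equiv> - S * G / (2 * \<gamma>\<^sup>2 * (1 - C))"
  shows "p0 = cc \<gamma> * p0 + ss \<gamma> * \<gamma> * A0 + G"
    and "A0 = C * (ss \<gamma> / \<gamma> * p0 - cc \<gamma> * A0) + S * B0"
    and "B0 = C * B0 - S * (ss \<gamma> / \<gamma> * p0 - cc \<gamma> * A0)"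
proof -
  have \<gamma>2: "\<gamma>\<^sup>2 \<noteq> 0" and C1': "1 - C \<noteq> 0"
    using \<gamma> C1 by simp_all
  have "ss \<gamma> / \<gamma> * p0 - cc \<gamma> * A0 = (\<gamma>\<^sup>2 + cc \<gamma> * (1 + \<gamma>\<^sup>2)) * G / (2 * \<gamma>\<^sup>2)"
    unfolding p0_def A0_def ss_div_gamma[OF \<gamma>] using \<gamma>2
    by (simp add: field_simps)
  also have "\<dots> = G / (2 * \<gamma>\<^sup>2)"
    by (simp add: cc_mult_one_plus_sq)
  finally have q0: "ss \<gamma> / \<gamma> * p0 - cc \<gamma> * A0 = G / (2 * \<gamma>\<^sup>2)" .
  show "p0 = cc \<gamma> * p0 + ss \<gamma> * \<gamma> * A0 + G"
    unfolding p0_def A0_def ss_mult_gamma using \<gamma>2 cc_mult_one_plus_sq[of \<gamma>]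
    by (simp add: field_simps) algebra
  show "A0 = C * (ss \<gamma> / \<gamma> * p0 - cc \<gamma> * A0) + S * B0"
    unfolding q0 unfolding A0_def B0_def using \<gamma>2 C1' CS
    by (simp add: field_simps) algebra
  show "B0 = C * B0 - S * (ss \<gamma> / \<gamma> * p0 - cc \<gamma> * A0)"
    unfolding q0 unfolding B0_def using \<gamma>2 C1' by (simp add: field_simps)
qed

lemma collision_recurrence_bounded:
  fixes p A B :: "nat \<Rightarrow> real"
  assumes \<gamma>: "\<gamma> > 0" and CS: "C\<^sup>2 + S\<^sup>2 = 1" and C1: "C \<noteq> 1"
    and p: "\<And>k. p (Suc k) = cc \<gamma> * p k + ss \<gamma> * \<gamma> * A k + G"
    and A: "\<And>k. A (Suc k) = C * (ss \<gamma> / \<gamma> * p k - cc \<gamma> * A k) + S * B k"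
    and B: "\<And>k. B (Suc k) = C * B k - S * (ss \<gamma> / \<gamma> * p k - cc \<gamma> * A k)"
  shows "\<exists>M. \<forall>k. \<bar>p k\<bar> \<le> M \<and> \<bar>A k\<bar> \<le> M \<and> \<bar>B k\<bar> \<le> M"
proof -
  obtain p0 A0 B0 where fix_p: "p0 = cc \<gamma> * p0 + ss \<gamma> * \<gamma> * A0 + G"
    and fix_A: "A0 = C * (ss \<gamma> / \<gamma> * p0 - cc \<gamma> * A0) + S * B0"
    and fix_B: "B0 = C * B0 - S * (ss \<gamma> / \<gamma> * p0 - cc \<gamma> * A0)"
    using collision_recurrence_fixed_point[OF \<gamma> CS C1] by blast
  define Q where "Q k = (p k - p0)\<^sup>2 + \<gamma>\<^sup>2 * (A k - A0)\<^sup>2 + \<gamma>\<^sup>2 * (B k - B0)\<^sup>2" for k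
  have "Q (Suc k) = Q k" for k
  proof -
    define q where "q = ss \<gamma> / \<gamma> * (p k - p0) - cc \<gamma> * (A k - A0)"
    have "p (Suc k) - p0 = cc \<gamma> * (p k - p0) + ss \<gamma> * \<gamma> * (A k - A0)"
      using p[of k] fix_p by (simp add: algebra_simps)
    moreover have "A (Suc k) - A0 = C * q + S * (B k - B0)"
      using A[of k] fix_A \<gamma> by (simp add: q_def field_simps)
    moreover have "B (Suc k) - B0 = C * (B k - B0) - S * q"
      using B[of k] fix_B \<gamma> by (simp add: q_def field_simps)
    ultimately show ?thesis
      using collision_energy_invariant[OF \<gamma> CS, of "p k - p0" "A k - A0" "B k - B0"]
      by (simp add: Q_def q_def distrib_left)
  qed
  then have Q: "Q k = Q 0" for k
    by (induction k) simp_all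
  define K where "K = sqrt (Q 0)"
  have sq_bound: "\<bar>x\<bar> \<le> K" if "x\<^sup>2 \<le> Q 0" for x
    using that real_le_rsqrt[of "\<bar>x\<bar>"] by (simp add: K_def)
  have "Q 0 = (p k - p0)\<^sup>2 + (\<gamma> * (A k - A0))\<^sup>2 + (\<gamma> * (B k - B0))\<^sup>2" for k
    using Q[of k] by (simp add: Q_def power_mult_distrib)
  then have "\<bar>p k - p0\<bar> \<le> K" "\<bar>\<gamma> * (A k - A0)\<bar> \<le> K" "\<bar>\<gamma> * (B k - B0)\<bar> \<le> K" for k
    by (intro sq_bound; smt (verit) zero_le_power2)+
  then have "\<bar>p k - p0\<bar> \<le> K" "\<bar>A k - A0\<bar> \<le> K / \<gamma>" "\<bar>B k - B0\<bar> \<le> K / \<gamma>" for k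
    using \<gamma> by (simp_all add: abs_mult pos_le_divide_eq mult.commute)
  moreover have "0 \<le> K"
    by (simp add: K_def Q_def)
  moreover have "0 \<le> K / \<gamma>"
    using \<open>0 \<le> K\<close> \<gamma> by simp
  ultimately show ?thesis
    by (intro exI[of _ "K + K / \<gamma> + \<bar>p0\<bar> + \<bar>A0\<bar> + \<bar>B0\<bar>"] allI) (smt (verit))
qed

lemma height_recurrence_bounded:
  fixes p A B z :: "nat \<Rightarrow> real"
  assumes \<gamma>: "\<gamma> > 0" and CS: "C\<^sup>2 + S\<^sup>2 = 1" and C1: "C \<noteq> 1"
    and p: "\<And>k. p (Suc k) = cc \<gamma> * p k + ss \<gamma> * \<gamma> * A k + G"
    and A: "\<And>k. A (Suc k) = C * (ss \<gamma> / \<gamma> * p k - cc \<gamma> * A k) + S * B k"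
    and B: "\<And>k. B (Suc k) = C * B k - S * (ss \<gamma> / \<gamma> * p k - cc \<gamma> * A k)"
    and z: "\<And>k. z (Suc k) = z k + T * (cc \<gamma> * p k + ss \<gamma> * \<gamma> * A k) + G * T / 2"
  shows "\<exists>M. \<forall>k. \<bar>z k\<bar> \<le> M"
proof -
  define D where "D = S / (2 * (1 - C))"
  define \<phi> where "\<phi> k = p k / 2 - A k / 2 - D * B k" for k
  have C1': "1 - C \<noteq> 0"
    using C1 by simp
  have \<phi>_Suc: "\<phi> (Suc k) = \<phi> k + cc \<gamma> * p k + ss \<gamma> * \<gamma> * A k + G / 2" for k
  proof -
    define q where "q = ss \<gamma> / \<gamma> * p k - cc \<gamma> * A k"
    have "D * (C * B k - S * q) = D * B k - S * B k / 2 - (1 + C) * q / 2"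
      unfolding D_def using C1' CS by (simp add: field_simps) algebra
    then have "\<phi> (Suc k) = (cc \<gamma> * p k + ss \<gamma> * \<gamma> * A k + G) / 2 + q / 2 - D * B k"
      unfolding \<phi>_def p A B q_def[symmetric] by (simp add: field_simps)
    then show ?thesis
      unfolding \<phi>_def q_def ss_div_gamma[OF \<gamma>] ss_mult_gamma by (simp add: field_simps)
  qed
  have z_\<phi>: "z k = z 0 - T * \<phi> 0 + T * \<phi> k" for k
    by (induction k) (simp_all add: z \<phi>_Suc algebra_simps)
  obtain M where M: "\<And>k. \<bar>p k\<bar> \<le> M \<and> \<bar>A k\<bar> \<le> M \<and> \<bar>B k\<bar> \<le> M"
    using collision_recurrence_bounded[where p = p and A = A and B = B, OF \<gamma> CS C1 p A B] by blast
  have \<phi>_bound: "\<bar>\<phi> k\<bar> \<le> M + \<bar>D\<bar> * M" for k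
  proof -
    have "\<bar>D * B k\<bar> \<le> \<bar>D\<bar> * M"
      unfolding abs_mult using M[of k] by (simp add: mult_left_mono)
    then show ?thesis
      using M[of k] unfolding \<phi>_def by linarith
  qed
  have "\<bar>z k\<bar> \<le> \<bar>z 0 - T * \<phi> 0\<bar> + \<bar>T\<bar> * (M + \<bar>D\<bar> * M)" for k
  proof -
    have "\<bar>T * \<phi> k\<bar> \<le> \<bar>T\<bar> * (M + \<bar>D\<bar> * M)"
      unfolding abs_mult using \<phi>_bound[of k] by (simp add: mult_left_mono)
    then show ?thesis
      using z_\<phi>[of k] by linarith
  qed
  then show ?thesis
    by blast
qed

section \<open>No-slip orbits in the cylinder\<close>

locale noslip_cylinder_orbit =
  fixes e F :: "real^3" and R r \<gamma> m f :: real and N :: enat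
    and t :: "nat \<Rightarrow> real" and a u :: "nat \<Rightarrow> real^3" and U :: "nat \<Rightarrow> real^3^3"
  assumes axis_unit: "norm e = 1"
    and r_pos: "0 < r" and r_less_R: "r < R" and \<gamma>_pos: "0 < \<gamma>" and m_pos: "0 < m"
    and axial_force: "F = f *\<^sub>R e"
    and U0_skew: "transpose (U 0) = - U 0"
    and is_orbit: "orbit e R r \<gamma> m F N t a u U"
    and rolling_0: "trans_rolling e r (a 0) (u 0) (U 0)"
begin

definition \<rho> :: real where "\<rho> = R - r"

definition nu :: "nat \<Rightarrow> real^3" where "nu k = nrm e (a k)"
definition tau :: "nat \<Rightarrow> real^3" where "tau k = nu k \<times> e"
definition hpos :: "nat \<Rightarrow> real^3" where "hpos k = perp e (a k)"
definition vout :: "nat \<Rightarrow> real^3" where "vout k = coll_u \<gamma> r (nu k) (u k) (U k)"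
definition hvel :: "nat \<Rightarrow> real^3" where "hvel k = perp e (vout k)"
definition dt :: "nat \<Rightarrow> real" where "dt k = t (Suc k) - t k"

lemma e_unit: "e \<bullet> e = 1"
  using axis_unit by (simp add: norm_eq_1)

lemma rho_pos: "0 < \<rho>"
  using r_less_R by (simp add: \<rho>_def)

lemma flight_perp: "perp e (flight e r \<gamma> m F a u U k s) = hpos k + s *\<^sub>R hvel k"
  by (simp add: flight_def hpos_def hvel_def vout_def nu_def perp_add perp_scaleR
      axial_force perp_self e_unit)

lemma flight_axial:
  "flight e r \<gamma> m F a u U k s \<bullet> e = a k \<bullet> e + s * (vout k \<bullet> e) + s\<^sup>2 / (2 * m) * f"
  by (simp add: flight_def vout_def nu_def inner_add_left axial_force e_unit)

lemma infinitely_many_collisions: "N = \<infinity>"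
proof (rule ccontr)
  assume "N \<noteq> \<infinity>"
  moreover have "1 \<le> N"
    using is_orbit by (simp add: orbit_def)
  ultimately obtain k where N: "N = enat (Suc k)"
    by (cases N; metis enat_ord_simps(1) not0_implies_Suc not_one_le_zero one_enat_def zero_enat_def)
  then have "norm (hpos k) = \<rho>"
    using is_orbit by (simp add: orbit_def cylBd_def hpos_def \<rho>_def)
  moreover have "\<forall>s>0. norm (hpos k + s *\<^sub>R hvel k) < \<rho>"
    using is_orbit N by (simp add: orbit_def flight_perp \<rho>_def)
  ultimately show False
    using ray_leaves_ball[of "hpos k" \<rho> "hvel k"] by force
qed

lemma norm_hpos: "norm (hpos k) = \<rho>"
  using is_orbit infinitely_many_collisions by (simp add: orbit_def cylBd_def hpos_def \<rho>_def)

lemma collision_step: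
  shows dt_pos: "0 < dt k"
    and flight_inside: "0 < s \<Longrightarrow> s < dt k \<Longrightarrow> norm (hpos k + s *\<^sub>R hvel k) < \<rho>"
    and a_Suc: "a (Suc k) = flight e r \<gamma> m F a u U k (dt k)"
    and u_Suc: "u (Suc k) = vout k + (dt k / m) *\<^sub>R F"
    and U_Suc: "U (Suc k) = coll_U \<gamma> r (nu k) (u k) (U k)"
proof -
  have "enat (Suc k) < N"
    by (simp add: infinitely_many_collisions)
  then have "t k < t (Suc k) \<and>
      (\<forall>s. 0 < s \<and> s < t (Suc k) - t k \<longrightarrow> norm (perp e (flight e r \<gamma> m F a u U k s)) < R - r) \<and>
      a (Suc k) = flight e r \<gamma> m F a u U k (t (Suc k) - t k) \<and>
      u (Suc k) = coll_u \<gamma> r (nrm e (a k)) (u k) (U k) + ((t (Suc k) - t k) / m) *\<^sub>R F \<and>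
      U (Suc k) = coll_U \<gamma> r (nrm e (a k)) (u k) (U k)"
    using is_orbit unfolding orbit_def by blast
  then show "0 < dt k" "0 < s \<Longrightarrow> s < dt k \<Longrightarrow> norm (hpos k + s *\<^sub>R hvel k) < \<rho>"
    "a (Suc k) = flight e r \<gamma> m F a u U k (dt k)" "u (Suc k) = vout k + (dt k / m) *\<^sub>R F"
    "U (Suc k) = coll_U \<gamma> r (nu k) (u k) (U k)"
    by (simp_all add: dt_def vout_def nu_def flight_perp[symmetric] \<rho>_def)
qed

lemma hpos_Suc: "hpos (Suc k) = hpos k + dt k *\<^sub>R hvel k"
  using a_Suc flight_perp by (simp add: hpos_def)

lemma nu_eq: "nu k = - (1 / \<rho>) *\<^sub>R hpos k"
  using norm_hpos by (simp add: nu_def nrm_def hpos_def)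

lemma nu_unit: "nu k \<bullet> nu k = 1"
proof -
  have "hpos k \<bullet> hpos k = \<rho>\<^sup>2"
    by (metis norm_hpos power2_norm_eq_inner)
  then show ?thesis
    using rho_pos by (simp add: nu_eq power2_eq_square)
qed

lemma nu_inner_axis: "nu k \<bullet> e = 0"
  by (simp add: nu_eq hpos_def perp_inner_axis e_unit)

lemma vout_inner_tau_Suc: "vout k \<bullet> tau (Suc k) = vout k \<bullet> tau k"
proof -
  have "tau (Suc k) = tau k - (dt k / \<rho>) *\<^sub>R (hvel k \<times> e)"
    unfolding tau_def nu_eq hpos_Suc
    by (simp only: scaleR_add_right cross_add_left cross_mult_left) simp
  then show ?thesis
    by (simp add: inner_diff_right hvel_def inner_perp_cross)
qed

lemma skew_and_rolling: "transpose (U k) = - U k \<and> u k \<bullet> tau k = r * ((U k *v nu k) \<bullet> tau k)"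
proof (induction k)
  case 0
  have "tau 0 \<bullet> tau 0 = 1"
    using cross_axis_unit[OF e_unit nu_unit nu_inner_axis] by (simp add: tau_def)
  then have "tau 0 \<noteq> 0"
    by auto
  then have "(u 0 - r *\<^sub>R (U 0 *v nu 0)) \<bullet> tau 0 = 0"
    using rolling_0 by (simp add: trans_rolling_def Let_def tau_def nu_def)
  then show ?case
    using U0_skew by (simp add: inner_diff_left)
next
  case (Suc k)
  then have skew: "transpose (U k) = - U k" and rolling: "u k \<bullet> tau k = r * ((U k *v nu k) \<bullet> tau k)"
    by simp_all
  note collision_hyps = e_unit nu_unit nu_inner_axis skew \<gamma>_pos r_pos rolling[unfolded tau_def]
  have skew': "transpose (U (Suc k)) = - U (Suc k)"
    using coll_U_skew[OF skew] by (simp add: U_Suc)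
  have "u (Suc k) \<bullet> tau (Suc k) = vout k \<bullet> tau (Suc k)"
    by (simp add: u_Suc axial_force inner_add_left tau_def dot_cross_self)
  also have "\<dots> = u k \<bullet> tau k"
    using vout_inner_tau_Suc[of k] coll_u_tangent[OF collision_hyps] by (simp add: vout_def tau_def)
  also have "\<dots> = r * ((U (Suc k) *v nu k) \<bullet> tau k)"
    using coll_U_normal_tangent[OF collision_hyps] rolling by (simp add: U_Suc tau_def)
  also have "\<dots> = r * ((U (Suc k) *v nu (Suc k)) \<bullet> tau (Suc k))"
    using skew_normal_tangent_invariant[OF skew' e_unit nu_unit nu_inner_axis nu_unit nu_inner_axis]
    by (simp add: tau_def)
  finally show ?case
    using skew' by simp
qed

lemma hvel_Suc: "hvel (Suc k) = hvel k - (2 * (hvel k \<bullet> nu (Suc k))) *\<^sub>R nu (Suc k)"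
proof -
  have perp_u: "perp e (u (Suc k)) = hvel k"
    by (simp add: u_Suc hvel_def axial_force perp_add perp_scaleR perp_self e_unit)
  have "hvel (Suc k) = perp e (u (Suc k)) - (2 * (u (Suc k) \<bullet> nu (Suc k))) *\<^sub>R nu (Suc k)"
    using skew_and_rolling[of "Suc k"]
    by (simp add: hvel_def vout_def tau_def coll_u_perp[OF e_unit nu_unit nu_inner_axis _ \<gamma>_pos r_pos])
  also have "u (Suc k) \<bullet> nu (Suc k) = hvel k \<bullet> nu (Suc k)"
    using perp_inner[OF nu_inner_axis, of "u (Suc k)"] perp_u by simp
  finally show ?thesis
    using perp_u by simp
qed

lemma billiard_invariants:
  "hvel k \<bullet> hvel k = hvel 0 \<bullet> hvel 0 \<and> hpos k \<bullet> hvel k = hpos 0 \<bullet> hvel 0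
    \<and> hvel k \<bullet> (hpos k \<times> e) = hvel 0 \<bullet> (hpos 0 \<times> e)"
proof (induction k)
  case (Suc k)
  have "dt k \<noteq> 0"
    using dt_pos[of k] by simp
  note reflection = disc_reflection_invariants[OF rho_pos norm_hpos norm_hpos hpos_Suc this]
  show ?case
    using Suc reflection by (simp add: hvel_Suc nu_eq)
qed simp

lemma hvel_0_nonzero: "hvel 0 \<noteq> 0"
proof
  assume "hvel 0 = 0"
  then show False
    using flight_inside[of "dt 0 / 2" 0] dt_pos[of 0] norm_hpos[of 0] by simp
qed

lemma dt_const: "dt k = dt 0"
proof -
  have chord: "2 * (hpos k \<bullet> hvel k) + dt k * (hvel k \<bullet> hvel k) = 0" for k
    using chord_condition[OF norm_hpos norm_hpos[of "Suc k", unfolded hpos_Suc]] dt_pos[of k]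
    by simp
  have "2 * (hpos 0 \<bullet> hvel 0) + dt k * (hvel 0 \<bullet> hvel 0) = 0"
    using chord[of k] billiard_invariants[of k] by simp
  then have "dt k * (hvel 0 \<bullet> hvel 0) = dt 0 * (hvel 0 \<bullet> hvel 0)"
    using chord[of 0] by linarith
  then show ?thesis
    using hvel_0_nonzero by simp
qed

definition turn_cos :: real where "turn_cos = nu 1 \<bullet> nu 0"
definition turn_sin :: real where "turn_sin = nu 1 \<bullet> tau 0"

lemma nu_Suc_inner:
  shows "nu (Suc k) \<bullet> nu k = 1 + dt 0 * (hpos 0 \<bullet> hvel 0) / \<rho>\<^sup>2"
    and "nu (Suc k) \<bullet> tau k = dt 0 * (hvel 0 \<bullet> (hpos 0 \<times> e)) / \<rho>\<^sup>2"
proof -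
  have "hpos k \<bullet> hpos k = \<rho>\<^sup>2"
    by (metis norm_hpos power2_norm_eq_inner)
  then have "hpos (Suc k) \<bullet> hpos k = \<rho>\<^sup>2 + dt 0 * (hpos 0 \<bullet> hvel 0)"
    using billiard_invariants[of k] dt_const[of k]
    by (simp add: hpos_Suc inner_add_left inner_commute[of "hvel k" "hpos k"])
  then show "nu (Suc k) \<bullet> nu k = 1 + dt 0 * (hpos 0 \<bullet> hvel 0) / \<rho>\<^sup>2"
    using rho_pos by (simp add: nu_eq power2_eq_square field_simps)
  show "nu (Suc k) \<bullet> tau k = dt 0 * (hvel 0 \<bullet> (hpos 0 \<times> e)) / \<rho>\<^sup>2"
    using billiard_invariants[of k] dt_const[of k] rho_pos
    by (simp add: tau_def nu_eq hpos_Suc inner_add_left cross_mult_left dot_cross_self power2_eq_square)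
qed

lemma nu_Suc_inner_const: "nu (Suc k) \<bullet> nu k = turn_cos" "nu (Suc k) \<bullet> tau k = turn_sin"
  using nu_Suc_inner[of k] nu_Suc_inner[of 0] by (simp_all add: turn_cos_def turn_sin_def)

lemma turn_sq: "turn_cos\<^sup>2 + turn_sin\<^sup>2 = 1"
  using normal_rotation(3)[OF e_unit nu_unit[of 0] nu_inner_axis[of 0] nu_unit[of 1] nu_inner_axis[of 1]]
  by (simp add: turn_cos_def turn_sin_def tau_def)

lemma turn_cos_ne_1: "turn_cos \<noteq> 1"
proof -
  have "0 < dt 0 * (hvel 0 \<bullet> hvel 0)"
    using dt_pos[of 0] hvel_0_nonzero by simp
  then have "hpos 0 \<bullet> hvel 0 \<noteq> 0"
    using chord_condition[OF norm_hpos norm_hpos[of 1, unfolded One_nat_def hpos_Suc]] dt_pos[of 0]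
    by simp
  then show ?thesis
    using nu_Suc_inner(1)[of 0] dt_pos[of 0] rho_pos by (simp add: turn_cos_def)
qed

lemma nu_Suc: "nu (Suc k) = turn_cos *\<^sub>R nu k + turn_sin *\<^sub>R tau k"
  using normal_rotation(1)[OF e_unit nu_unit[of k] nu_inner_axis[of k] nu_unit[of "Suc k"]
      nu_inner_axis[of "Suc k"]]
  by (simp only: nu_Suc_inner_const[unfolded tau_def] tau_def)

lemma tau_Suc: "tau (Suc k) = turn_cos *\<^sub>R tau k - turn_sin *\<^sub>R nu k"
  using normal_rotation(2)[OF e_unit nu_unit[of k] nu_inner_axis[of k] nu_unit[of "Suc k"]
      nu_inner_axis[of "Suc k"]]
  by (simp only: nu_Suc_inner_const[unfolded tau_def] tau_def)

(* If U k acts as x \<mapsto> \<omega> \<times> x, then spin_nu k = r (\<omega> \<bullet> tau k) and spin_tau k = - r (\<omega> \<bullet> nu k). *)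
definition axial_vel :: "nat \<Rightarrow> real" where "axial_vel k = u k \<bullet> e"
definition spin_nu :: "nat \<Rightarrow> real" where "spin_nu k = r * ((U k *v nu k) \<bullet> e)"
definition spin_tau :: "nat \<Rightarrow> real" where "spin_tau k = r * ((U k *v tau k) \<bullet> e)"
definition axial_gain :: real where "axial_gain = dt 0 * f / m"

lemma vout_axial: "vout k \<bullet> e = cc \<gamma> * axial_vel k + ss \<gamma> * \<gamma> * spin_nu k"
  by (simp add: vout_def axial_vel_def spin_nu_def coll_u_axial nu_inner_axis)

lemma axial_vel_Suc: "axial_vel (Suc k) = cc \<gamma> * axial_vel k + ss \<gamma> * \<gamma> * spin_nu k + axial_gain"
  using vout_axial[of k] dt_const[of k]
  by (simp add: axial_vel_def u_Suc axial_force inner_add_left e_unit axial_gain_def)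

lemma U_Suc_nu_axial:
  "r * ((U (Suc k) *v nu k) \<bullet> e) = ss \<gamma> / \<gamma> * axial_vel k - cc \<gamma> * spin_nu k"
  by (simp add: U_Suc axial_vel_def spin_nu_def coll_U_normal_axial[OF nu_unit nu_inner_axis \<gamma>_pos r_pos])

lemma U_Suc_tau_axial: "r * ((U (Suc k) *v tau k) \<bullet> e) = spin_tau k"
  using cross_axis_inner_normal[OF e_unit nu_unit nu_inner_axis, of k]
  by (simp add: U_Suc spin_tau_def coll_U_orthogonal_axial nu_inner_axis tau_def)

lemma spin_nu_Suc:
  "spin_nu (Suc k) = turn_cos * (ss \<gamma> / \<gamma> * axial_vel k - cc \<gamma> * spin_nu k) + turn_sin * spin_tau k"
proof -
  have "spin_nu (Suc k) =
      turn_cos * (r * ((U (Suc k) *v nu k) \<bullet> e)) + turn_sin * (r * ((U (Suc k) *v tau k) \<bullet> e))"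
    by (simp add: spin_nu_def nu_Suc matrix_vector_right_distrib matrix_vector_mult_scaleR
        inner_add_left algebra_simps)
  then show ?thesis
    by (simp only: U_Suc_nu_axial U_Suc_tau_axial)
qed

lemma spin_tau_Suc:
  "spin_tau (Suc k) = turn_cos * spin_tau k - turn_sin * (ss \<gamma> / \<gamma> * axial_vel k - cc \<gamma> * spin_nu k)"
proof -
  have "spin_tau (Suc k) =
      turn_cos * (r * ((U (Suc k) *v tau k) \<bullet> e)) - turn_sin * (r * ((U (Suc k) *v nu k) \<bullet> e))"
    by (simp add: spin_tau_def tau_Suc matrix_vector_mult_diff_distrib matrix_vector_mult_scaleR
        inner_diff_left algebra_simps)
  then show ?thesis
    by (simp only: U_Suc_nu_axial U_Suc_tau_axial)
qed

lemma height_Suc: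
  "a (Suc k) \<bullet> e = a k \<bullet> e + dt 0 * (cc \<gamma> * axial_vel k + ss \<gamma> * \<gamma> * spin_nu k) + axial_gain * dt 0 / 2"
  using dt_const[of k]
  by (simp add: a_Suc flight_axial vout_axial axial_gain_def power2_eq_square mult_ac)

lemma axial_motion_bounded: "\<exists>M. \<forall>k. \<bar>a k \<bullet> e\<bar> \<le> M \<and> \<bar>vout k \<bullet> e\<bar> \<le> M"
proof -
  note recurrence = \<gamma>_pos turn_sq turn_cos_ne_1 axial_vel_Suc spin_nu_Suc spin_tau_Suc
  obtain M1 where M1: "\<And>k. \<bar>a k \<bullet> e\<bar> \<le> M1"
    using height_recurrence_bounded[where p = axial_vel and A = spin_nu and B = spin_tau
        and z = "\<lambda>k. a k \<bullet> e", OF recurrence height_Suc] by blast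
  obtain M2 where M2: "\<And>k. \<bar>axial_vel k\<bar> \<le> M2"
    using collision_recurrence_bounded[where p = axial_vel and A = spin_nu and B = spin_tau,
        OF recurrence] by blast
  have "\<bar>vout k \<bullet> e\<bar> \<le> M2 + \<bar>axial_gain\<bar>" for k
    using M2[of "Suc k"] axial_vel_Suc[of k] vout_axial[of k] by linarith
  with M1 show ?thesis
    by (intro exI[of _ "max M1 (M2 + \<bar>axial_gain\<bar>)"]) (simp add: le_max_iff_disj)
qed

lemma flight_perp_bounded:
  assumes "s \<in> flight_dom N t k"
  shows "norm (perp e (flight e r \<gamma> m F a u U k s)) \<le> \<rho>"
proof -
  have "0 \<le> s" "s \<le> dt k"
    using assms by (simp_all add: flight_dom_def infinitely_many_collisions dt_def)
  then consider "s = 0" | "s = dt k" | "0 < s \<and> s < dt k"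
    by linarith
  then show ?thesis
    using norm_hpos[of k] norm_hpos[of "Suc k"] flight_inside[of s k]
    by cases (auto simp: flight_perp hpos_Suc)
qed

lemma trajectory_bounded:
  "bounded (\<Union>k \<in> {k. enat k < N}. flight e r \<gamma> m F a u U k ` flight_dom N t k)"
proof -
  obtain M where M: "\<And>k. \<bar>a k \<bullet> e\<bar> \<le> M \<and> \<bar>vout k \<bullet> e\<bar> \<le> M"
    using axial_motion_bounded by blast
  have "norm (flight e r \<gamma> m F a u U k s) \<le> \<rho> + M + dt 0 * M + (dt 0)\<^sup>2 / (2 * m) * \<bar>f\<bar>"
    if s: "s \<in> flight_dom N t k" for k s
  proof -
    have "0 \<le> s" "s \<le> dt 0"
      using s dt_const[of k] by (simp_all add: flight_dom_def infinitely_many_collisions dt_def)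
    then have "\<bar>s * (vout k \<bullet> e)\<bar> \<le> dt 0 * M" and "s\<^sup>2 / (2 * m) * \<bar>f\<bar> \<le> (dt 0)\<^sup>2 / (2 * m) * \<bar>f\<bar>"
      using M[of k] m_pos
      by (auto simp: abs_mult intro!: mult_mono mult_right_mono divide_right_mono power_mono)
    moreover have "\<bar>s\<^sup>2 / (2 * m) * f\<bar> = s\<^sup>2 / (2 * m) * \<bar>f\<bar>"
      using m_pos by (simp add: abs_mult)
    ultimately have "\<bar>flight e r \<gamma> m F a u U k s \<bullet> e\<bar> \<le> M + dt 0 * M + (dt 0)\<^sup>2 / (2 * m) * \<bar>f\<bar>"
      using M[of k] unfolding flight_axial by arith
    then show ?thesis
      using norm_le_perp_plus_axial[OF axis_unit] flight_perp_bounded[OF s]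
      by (smt (verit))
  qed
  then show ?thesis
    unfolding bounded_iff by blast
qed

end

theorem theorem2p12:
  fixes e F :: "real^3" and R r \<gamma> m f :: real and N :: enat
    and t :: "nat \<Rightarrow> real" and a u :: "nat \<Rightarrow> real^3" and U :: "nat \<Rightarrow> real^3^3"
  assumes "norm e = 1"
    and "0 < r" and "r < R" and "0 < \<gamma>" and "0 < m"
    and "F = f *\<^sub>R e"
    and "transpose (U 0) = - U 0"
    and "orbit e R r \<gamma> m F N t a u U"
    and "trans_rolling e r (a 0) (u 0) (U 0)"
    and "\<forall>s \<in> flight_dom N t 0. flight e r \<gamma> m F a u U 0 s \<notin> axis e"
  shows "bounded (\<Union>k \<in> {k. enat k < N}. flight e r \<gamma> m F a u U k ` flight_dom N t k)"
proof -
  interpret noslip_cylinder_orbit e F R r \<gamma> m f N t a u U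
    using assms(1-9) by (simp add: noslip_cylinder_orbit_def)
  show ?thesis
    by (rule trajectory_bounded)
qed

end
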